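(* Let $A$ be a circular $m\times n$ matrix, $b\in\mathbb{Z}_+^m$, $x^*\in Q(A,b)\setminus Q^*(A,b)$, and let $\Gamma$ be a circuit with negative cost in $D(A,x^* )$. Then the $\Gamma$-inequality is violated by $x^*$.
   Context: Notation: $[n]=\{1,\dots,n\}$ with addition mod $n$ (index $0$ identified with $n$); for $a,c\in[n]$ with $t\ge0$ minimal such that $a+t\equiv c\pmod n$, $[a,c)_n=\{a,\dots,a+t-1\}$ (mod $n$). An $m\times n$ $\{0,1\}$-matrix $A$ is circular if for each row $i$ there are $\ell_i\in[n]$ and an integer $2\le k_i\le n-1$ with row $i$ the incidence vector of $[\ell_i,\ell_i+k_i)_n$. $Q(A,b)=\{x\ge0:Ax\ge b\}$, $Q^*(A,b)=\operatorname{conv}(Q(A,b)\cap\mathbb{Z}^n)$. $D(A)$: node set $[n]$ (labels mod $n$); forward arcs $a_i=(\ell_i-1,\ell_i+k_i-1)$ ($i\in[m]$, length $k_i$), $a_{m+j}=(j-1,j)$ ($j\in[n]$, length $1$); reverse arcs $\bar a_i=(\ell_i+k_i-1,\ell_i-1)$ (length $-k_i$), $\bar a_{m+j}=(j,j-1)$ (length $-1$). A circuit is a simple directed circuit; winding number $p(\Gamma)$: $p(\Gamma)n=\sum_{a\in E(\Gamma)}l(a)$. A forward row arc $a_i$ jumps over $j$ iff $j\in[\ell_i,\ell_i+k_i)_n$; $(j-1,j)$ jumps over $j$ only; $\bar a_k$ jumps over $j$ iff $a_k$ does. $p^-(\Gamma,j)$ = number of reverse arcs of $\Gamma$ jumping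 over $j$. $\Gamma$-inequality (for $p(\Gamma)\ne0$): with $t(\Gamma,b)=\sum_{i:a_i\in E(\Gamma)}b_i-\sum_{i:\bar a_i\in E(\Gamma)}b_i$, $\beta=\lfloor t(\Gamma,b)/p(\Gamma)\rfloor$, $r=t(\Gamma,b)-\beta p(\Gamma)$, it is $\sum_{j\in[n]}[p^-(\Gamma,j)+r]x_j\ge r(\beta+1)+\sum_{i:\bar a_i\in E(\Gamma)}b_i$. Costs: $\tilde A=\binom{A}{I}$, $d=\binom{b}{0}$, $v$ = last column of $\tilde A$; for $x^*\in Q(A,b)$: $s^*=\tilde Ax^*-d$, $\mu=\lceil\mathbf{1}^Tx^*\rceil-\mathbf{1}^Tx^*$, $c^+(x^* )=\mu(s^*-(1-\mu)v)$, $c^-(x^* )=(1-\mu)(s^*+\mu v)$. In $D(A,x^* )$ arc $a_k$ ($k\in[m+n]$) has cost $c^+_k(x^* )$ and $\bar a_k$ has cost $c^-_k(x^* )$; the cost of a circuit is the sum of its arc costs. *)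

theory Defs
  imports Complex_Main
begin

text \<open>Indices: rows i in {1..m}, columns j in {1..n}; vectors are functions on nat
  of which only the coordinates 1..n matter. Nodes of D(A) are residues mod n
  (node n is identified with node 0).\<close>

definition cyc_interval :: "nat \<Rightarrow> nat \<Rightarrow> nat \<Rightarrow> nat set" where
  "cyc_interval n a t = {(a - 1 + s) mod n + 1 | s. s < t}"

definition circular_rep :: "nat \<Rightarrow> nat \<Rightarrow> (nat \<Rightarrow> nat \<Rightarrow> real) \<Rightarrow> (nat \<Rightarrow> nat) \<Rightarrow> (nat \<Rightarrow> nat) \<Rightarrow> bool" where
  "circular_rep m n A l k \<longleftrightarrow>
     (\<forall>i\<in>{1..m}. l i \<in> {1..n} \<and> 2 \<le> k i \<and> k i \<le> n - 1 \<and>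
        (\<forall>j\<in>{1..n}. A i j = (if j \<in> cyc_interval n (l i) (k i) then 1 else 0)))"

definition circular :: "nat \<Rightarrow> nat \<Rightarrow> (nat \<Rightarrow> nat \<Rightarrow> real) \<Rightarrow> bool" where
  "circular m n A \<longleftrightarrow> (\<exists>l k. circular_rep m n A l k)"

definition Qpoly :: "nat \<Rightarrow> nat \<Rightarrow> (nat \<Rightarrow> nat \<Rightarrow> real) \<Rightarrow> (nat \<Rightarrow> int) \<Rightarrow> (nat \<Rightarrow> real) set" where
  "Qpoly m n A b = {x. (\<forall>j\<in>{1..n}. x j \<ge> 0) \<and>
      (\<forall>i\<in>{1..m}. (\<Sum>j=1..n. A i j * x j) \<ge> of_int (b i))}"

text \<open>Q*(A,b) = conv(Q(A,b) \<inter> Z^n), written out as finite convex combinations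
  (equality of points means equality of the coordinates 1..n).\<close>
definition Qint_hull :: "nat \<Rightarrow> nat \<Rightarrow> (nat \<Rightarrow> nat \<Rightarrow> real) \<Rightarrow> (nat \<Rightarrow> int) \<Rightarrow> (nat \<Rightarrow> real) set" where
  "Qint_hull m n A b = {x. \<exists>F u. finite F \<and>
      F \<subseteq> {y \<in> Qpoly m n A b. \<forall>j\<in>{1..n}. y j \<in> \<int>} \<and>
      (\<forall>y\<in>F. u y \<ge> (0::real)) \<and> (\<Sum>y\<in>F. u y) = 1 \<and>
      (\<forall>j\<in>{1..n}. x j = (\<Sum>y\<in>F. u y * y j))}"

text \<open>Arcs of D(A): (True, k) is a_k and (False, k) is the reverse arc, k in {1..m+n}.\<close>
type_synonym arc = "bool \<times> nat"

definition fwd_ends :: "nat \<Rightarrow> nat \<Rightarrow> (nat \<Rightarrow> nat) \<Rightarrow> (nat \<Rightarrow> nat) \<Rightarrow> nat \<Rightarrow> nat \<times> nat" where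
  "fwd_ends m n l k i =
     (if i \<le> m then ((l i - 1) mod n, (l i + k i - 1) mod n)
      else ((i - m - 1) mod n, (i - m) mod n))"

definition arc_tail :: "nat \<Rightarrow> nat \<Rightarrow> (nat \<Rightarrow> nat) \<Rightarrow> (nat \<Rightarrow> nat) \<Rightarrow> arc \<Rightarrow> nat" where
  "arc_tail m n l k a = (if fst a then fst (fwd_ends m n l k (snd a)) else snd (fwd_ends m n l k (snd a)))"

definition arc_head :: "nat \<Rightarrow> nat \<Rightarrow> (nat \<Rightarrow> nat) \<Rightarrow> (nat \<Rightarrow> nat) \<Rightarrow> arc \<Rightarrow> nat" where
  "arc_head m n l k a = (if fst a then snd (fwd_ends m n l k (snd a)) else fst (fwd_ends m n l k (snd a)))"

definition arc_len :: "nat \<Rightarrow> (nat \<Rightarrow> nat) \<Rightarrow> arc \<Rightarrow> int" where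
  "arc_len m k a = (let L = (if snd a \<le> m then int (k (snd a)) else 1) in if fst a then L else - L)"

definition jumps :: "nat \<Rightarrow> nat \<Rightarrow> (nat \<Rightarrow> nat) \<Rightarrow> (nat \<Rightarrow> nat) \<Rightarrow> arc \<Rightarrow> nat \<Rightarrow> bool" where
  "jumps m n l k a j = (if snd a \<le> m then j \<in> cyc_interval n (l (snd a)) (k (snd a)) else j = snd a - m)"

definition is_circuit :: "nat \<Rightarrow> nat \<Rightarrow> (nat \<Rightarrow> nat) \<Rightarrow> (nat \<Rightarrow> nat) \<Rightarrow> arc list \<Rightarrow> bool" where
  "is_circuit m n l k \<Gamma> \<longleftrightarrow> \<Gamma> \<noteq> [] \<and> (\<forall>a\<in>set \<Gamma>. snd a \<in> {1..m+n}) \<and>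
     distinct (map (arc_tail m n l k) \<Gamma>) \<and>
     (\<forall>t<length \<Gamma>. arc_head m n l k (\<Gamma> ! t) = arc_tail m n l k (\<Gamma> ! ((t + 1) mod length \<Gamma>)))"

definition winding :: "nat \<Rightarrow> nat \<Rightarrow> (nat \<Rightarrow> nat) \<Rightarrow> arc list \<Rightarrow> int" where
  "winding m n k \<Gamma> = (\<Sum>a\<in>set \<Gamma>. arc_len m k a) div int n"

definition p_minus :: "nat \<Rightarrow> nat \<Rightarrow> (nat \<Rightarrow> nat) \<Rightarrow> (nat \<Rightarrow> nat) \<Rightarrow> arc list \<Rightarrow> nat \<Rightarrow> nat" where
  "p_minus m n l k \<Gamma> j = card {a \<in> set \<Gamma>. \<not> fst a \<and> jumps m n l k a j}"

definition t_val :: "nat \<Rightarrow> (nat \<Rightarrow> int) \<Rightarrow> arc list \<Rightarrow> int" where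
  "t_val m b \<Gamma> = (\<Sum>i\<in>{i\<in>{1..m}. (True, i) \<in> set \<Gamma>}. b i) - (\<Sum>i\<in>{i\<in>{1..m}. (False, i) \<in> set \<Gamma>}. b i)"

definition rev_b :: "nat \<Rightarrow> (nat \<Rightarrow> int) \<Rightarrow> arc list \<Rightarrow> int" where
  "rev_b m b \<Gamma> = (\<Sum>i\<in>{i\<in>{1..m}. (False, i) \<in> set \<Gamma>}. b i)"

definition gamma_ineq_violated :: "nat \<Rightarrow> nat \<Rightarrow> (nat \<Rightarrow> nat) \<Rightarrow> (nat \<Rightarrow> nat) \<Rightarrow> (nat \<Rightarrow> int) \<Rightarrow> arc list \<Rightarrow> (nat \<Rightarrow> real) \<Rightarrow> bool" where
  "gamma_ineq_violated m n l k b \<Gamma> x \<longleftrightarrow>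
     (let p = winding m n k \<Gamma>; t = t_val m b \<Gamma>;
          \<beta> = \<lfloor>real_of_int t / real_of_int p\<rfloor>; r = t - \<beta> * p
      in (\<Sum>j=1..n. (real (p_minus m n l k \<Gamma> j) + of_int r) * x j)
           < of_int (r * (\<beta> + 1) + rev_b m b \<Gamma>))"

definition ext_row :: "nat \<Rightarrow> (nat \<Rightarrow> nat \<Rightarrow> real) \<Rightarrow> nat \<Rightarrow> nat \<Rightarrow> real" where
  "ext_row m A r j = (if r \<le> m then A r j else if j = r - m then 1 else 0)"

definition slack :: "nat \<Rightarrow> nat \<Rightarrow> (nat \<Rightarrow> nat \<Rightarrow> real) \<Rightarrow> (nat \<Rightarrow> int) \<Rightarrow> (nat \<Rightarrow> real) \<Rightarrow> nat \<Rightarrow> real" where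
  "slack m n A b x r = (\<Sum>j=1..n. ext_row m A r j * x j) - (if r \<le> m then of_int (b r) else 0)"

definition mu :: "nat \<Rightarrow> (nat \<Rightarrow> real) \<Rightarrow> real" where
  "mu n x = of_int \<lceil>\<Sum>j=1..n. x j\<rceil> - (\<Sum>j=1..n. x j)"

definition c_plus :: "nat \<Rightarrow> nat \<Rightarrow> (nat \<Rightarrow> nat \<Rightarrow> real) \<Rightarrow> (nat \<Rightarrow> int) \<Rightarrow> (nat \<Rightarrow> real) \<Rightarrow> nat \<Rightarrow> real" where
  "c_plus m n A b x r = mu n x * (slack m n A b x r - (1 - mu n x) * ext_row m A r n)"

definition c_minus :: "nat \<Rightarrow> nat \<Rightarrow> (nat \<Rightarrow> nat \<Rightarrow> real) \<Rightarrow> (nat \<Rightarrow> int) \<Rightarrow> (nat \<Rightarrow> real) \<Rightarrow> nat \<Rightarrow> real" where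
  "c_minus m n A b x r = (1 - mu n x) * (slack m n A b x r + mu n x * ext_row m A r n)"

definition arc_cost :: "nat \<Rightarrow> nat \<Rightarrow> (nat \<Rightarrow> nat \<Rightarrow> real) \<Rightarrow> (nat \<Rightarrow> int) \<Rightarrow> (nat \<Rightarrow> real) \<Rightarrow> arc \<Rightarrow> real" where
  "arc_cost m n A b x a = (if fst a then c_plus m n A b x (snd a) else c_minus m n A b x (snd a))"

definition circuit_cost :: "nat \<Rightarrow> nat \<Rightarrow> (nat \<Rightarrow> nat \<Rightarrow> real) \<Rightarrow> (nat \<Rightarrow> int) \<Rightarrow> (nat \<Rightarrow> real) \<Rightarrow> arc list \<Rightarrow> real" where
  "circuit_cost m n A b x \<Gamma> = (\<Sum>a\<in>set \<Gamma>. arc_cost m n A b x a)"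

end

theory Submission
  imports Defs
begin

(* Let P_y(v) = y 1 + ... + y v. An arc a of D(A) traversed with sign s = +1 or -1 covers the
   cyclic window of its row, so s (A~ y)_a = P_y(head a) - P_y(tail a) + s w_a P_y(n), where w_a
   counts how often the arc passes node 0; summing around the circuit the P_y-terms telescope and
   the w_a add up to p(Gamma). For y = x this says F - R = p(Gamma) T - t(Gamma,b), with F, R >= 0
   the total slacks of x on forward and reverse arcs and T = sum x; for y = e_n it turns the cost
   of Gamma into mu F + (1 - mu) R - mu (1 - mu) p(Gamma). A negative cost then forces p(Gamma) > 0
   and ceil T = beta + 1, and what remains of it is R + r T < r (beta + 1), which is the violated
   Gamma-inequality because its left-hand side at x equals R + r T plus the b_i of the reverse
   arcs. *)

lemma sum_list_rotate1: "sum_list (rotate1 xs) = (sum_list xs :: 'a::comm_monoid_add)"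
  by (cases xs) (simp_all add: add.commute)

lemma circuit_distinct: "is_circuit m n l k \<Gamma> \<Longrightarrow> distinct \<Gamma>"
  unfolding is_circuit_def using distinct_map by blast

lemma circuit_heads_eq_rotate1_tails:
  assumes "is_circuit m n l k \<Gamma>"
  shows "map (arc_head m n l k) \<Gamma> = rotate1 (map (arc_tail m n l k) \<Gamma>)"
  using assms unfolding is_circuit_def by (intro nth_equalityI) (auto simp: nth_rotate1)

lemma circuit_telescope:
  fixes F :: "nat \<Rightarrow> 'a::ab_group_add"
  assumes "is_circuit m n l k \<Gamma>"
  shows "(\<Sum>a\<in>set \<Gamma>. F (arc_head m n l k a) - F (arc_tail m n l k a)) = 0"
proof -
  have "(\<Sum>a\<in>set \<Gamma>. F (arc_head m n l k a) - F (arc_tail m n l k a))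
      = sum_list (map F (map (arc_head m n l k) \<Gamma>)) - sum_list (map F (map (arc_tail m n l k) \<Gamma>))"
    using circuit_distinct[OF assms]
    by (simp add: sum_subtractf sum_list_distinct_conv_sum_set)
  also have "map F (map (arc_head m n l k) \<Gamma>) = rotate1 (map F (map (arc_tail m n l k) \<Gamma>))"
    by (simp only: circuit_heads_eq_rotate1_tails[OF assms] rotate1_map)
  finally show ?thesis by (simp only: sum_list_rotate1 diff_self)
qed

lemma circuit_n_pos:
  assumes "circular_rep m n A l k" and "is_circuit m n l k \<Gamma>"
  shows "0 < n"
proof -
  have "hd \<Gamma> \<in> set \<Gamma>" using assms(2) unfolding is_circuit_def by simp
  then have "snd (hd \<Gamma>) \<in> {1..m+n}" using assms(2) unfolding is_circuit_def by blast
  then show ?thesis using assms(1) unfolding circular_rep_def by (cases "snd (hd \<Gamma>) \<le> m") force+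
qed

definition prefix_sum :: "(nat \<Rightarrow> real) \<Rightarrow> nat \<Rightarrow> real" where
  "prefix_sum y v = (\<Sum>j=1..v. y j)"

lemma prefix_sum_0 [simp]: "prefix_sum y 0 = 0"
  unfolding prefix_sum_def by simp

lemma prefix_sum_Suc: "prefix_sum y (Suc v) = prefix_sum y v + y (Suc v)"
  unfolding prefix_sum_def by simp

lemma sum_cyclic_window:
  assumes "u < n"
  shows "(\<Sum>s<K. y ((u + s) mod n + 1))
    = prefix_sum y ((u + K) mod n) - prefix_sum y u + real ((u + K) div n) * prefix_sum y n"
proof (induction K)
  case 0
  then show ?case using assms by simp
next
  case (Suc K)
  let ?q = "(u + K) mod n"
  have "(\<Sum>s<Suc K. y ((u + s) mod n + 1))
      = prefix_sum y ?q - prefix_sum y u + real ((u + K) div n) * prefix_sum y n + y (Suc ?q)"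
    using Suc by simp
  also have "\<dots> = prefix_sum y ((u + Suc K) mod n) - prefix_sum y u
      + real ((u + Suc K) div n) * prefix_sum y n"
  proof (cases "Suc ?q = n")
    case True
    then have "(u + Suc K) mod n = 0" and "(u + Suc K) div n = Suc ((u + K) div n)"
      using mod_Suc[of "u + K" n] div_Suc[of "u + K" n] by simp_all
    moreover have "prefix_sum y n = prefix_sum y ?q + y n"
      using prefix_sum_Suc[of y ?q] True by simp
    ultimately show ?thesis using True by (simp add: algebra_simps)
  next
    case False
    then have "(u + Suc K) mod n = Suc ?q" and "(u + Suc K) div n = (u + K) div n"
      using mod_Suc[of "u + K" n] div_Suc[of "u + K" n] by simp_all
    then show ?thesis by (simp add: prefix_sum_Suc)
  qed
  finally show ?case .
qed

lemma add_mod_inj_on: "inj_on (\<lambda>s. (x + s) mod n) {..<n::nat}"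
proof -
  have "s = s'" if "s \<le> s'" "s' < n" "(x + s) mod n = (x + s') mod n" for s s'
  proof -
    have "n dvd s' - s" using that mod_eq_dvd_iff_nat[of "x + s" "x + s'" n] by simp
    then show "s = s'" using that nat_dvd_not_less[of "s' - s" n] by linarith
  qed
  then show ?thesis unfolding inj_on_def by (metis lessThan_iff nat_le_linear)
qed

lemma cyc_interval_subset: "0 < n \<Longrightarrow> cyc_interval n a t \<subseteq> {1..n}"
  unfolding cyc_interval_def by (auto simp: Suc_le_eq)

lemma cyc_interval_eq_image: "cyc_interval n a t = (\<lambda>s. (a - 1 + s) mod n + 1) ` {..<t}"
  unfolding cyc_interval_def by blast

lemma sum_cyc_interval:
  assumes "t \<le> n"
  shows "(\<Sum>j\<in>cyc_interval n a t. y j) = (\<Sum>s<t. y ((a - 1 + s) mod n + 1))"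
proof -
  have "inj_on (\<lambda>s. (a - 1 + s) mod n) {..<t}"
    by (rule inj_on_subset[OF add_mod_inj_on]) (use assms in auto)
  then have "inj_on (\<lambda>s. (a - 1 + s) mod n + 1) {..<t}"
    by (simp add: inj_on_def)
  then show ?thesis by (simp add: cyc_interval_eq_image sum.reindex)
qed

definition arc_span :: "nat \<Rightarrow> (nat \<Rightarrow> nat) \<Rightarrow> nat \<Rightarrow> nat" where
  "arc_span m k i = (if i \<le> m then k i else 1)"

lemma fwd_ends_cyclic:
  assumes circ: "circular_rep m n A l k" and i: "i \<in> {1..m+n}"
  shows "fst (fwd_ends m n l k i) < n" (is ?tail)
    and "snd (fwd_ends m n l k i) = (fst (fwd_ends m n l k i) + arc_span m k i) mod n" (is ?head)
    and "(\<Sum>j=1..n. ext_row m A i j * y j)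
      = (\<Sum>s<arc_span m k i. y ((fst (fwd_ends m n l k i) + s) mod n + 1))" (is ?window)
proof -
  have "?tail \<and> ?head \<and> ?window"
  proof (cases "i \<le> m")
    case True
    from circ i True have l: "l i \<in> {1..n}" and k: "k i \<le> n - 1"
      and row: "\<forall>j\<in>{1..n}. A i j = (if j \<in> cyc_interval n (l i) (k i) then 1 else 0)"
      unfolding circular_rep_def by auto
    have "(\<Sum>j=1..n. ext_row m A i j * y j)
        = (\<Sum>j=1..n. if j \<in> cyc_interval n (l i) (k i) then y j else 0)"
      using row True by (intro sum.cong) (auto simp: ext_row_def)
    also have "\<dots> = sum y ({1..n} \<inter> cyc_interval n (l i) (k i))"
      by (simp add: sum.inter_restrict)
    also have "\<dots> = sum y (cyc_interval n (l i) (k i))"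
      using cyc_interval_subset[of n "l i" "k i"] l by (simp add: Int_absorb1)
    also have "\<dots> = (\<Sum>s<k i. y ((l i - 1 + s) mod n + 1))"
      using k by (intro sum_cyc_interval) simp
    finally have "(\<Sum>j=1..n. ext_row m A i j * y j) = (\<Sum>s<k i. y ((l i - 1 + s) mod n + 1))" .
    moreover have "fwd_ends m n l k i = (l i - 1, (l i - 1 + k i) mod n)"
      using True l by (auto simp: fwd_ends_def)
    moreover have "l i - 1 < n" using l by auto
    ultimately show ?thesis
      using True by (simp add: arc_span_def)
  next
    case False
    define j where "j = i - m"
    have j: "i = m + j" "j \<in> {1..n}" using False i unfolding j_def by auto
    have "(\<Sum>j'=1..n. ext_row m A i j' * y j') = (\<Sum>j'=1..n. if j' = j then y j' else 0)"
      using j by (intro sum.cong) (auto simp: ext_row_def)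
    also have "\<dots> = y j" using j(2) by simp
    finally show ?thesis
      using False j by (auto simp: fwd_ends_def arc_span_def)
  qed
  then show ?tail and ?head and ?window by auto
qed

definition arc_wraps :: "nat \<Rightarrow> nat \<Rightarrow> (nat \<Rightarrow> nat) \<Rightarrow> (nat \<Rightarrow> nat) \<Rightarrow> nat \<Rightarrow> nat" where
  "arc_wraps m n l k i = (fst (fwd_ends m n l k i) + arc_span m k i) div n"

definition arc_sign :: "arc \<Rightarrow> 'a::ring_1" where
  "arc_sign a = (if fst a then 1 else - 1)"

lemma signed_ext_row_sum:
  assumes circ: "circular_rep m n A l k" and a: "snd a \<in> {1..m+n}"
  shows "arc_sign a * (\<Sum>j=1..n. ext_row m A (snd a) j * y j)
    = prefix_sum y (arc_head m n l k a) - prefix_sum y (arc_tail m n l k a)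
      + arc_sign a * real (arc_wraps m n l k (snd a)) * prefix_sum y n"
proof -
  have "(\<Sum>j=1..n. ext_row m A (snd a) j * y j)
    = prefix_sum y (snd (fwd_ends m n l k (snd a))) - prefix_sum y (fst (fwd_ends m n l k (snd a)))
      + real (arc_wraps m n l k (snd a)) * prefix_sum y n"
    unfolding fwd_ends_cyclic[OF circ a] arc_wraps_def
    by (rule sum_cyclic_window[OF fwd_ends_cyclic(1)[OF circ a]])
  then show ?thesis
    by (simp add: arc_head_def arc_tail_def arc_sign_def algebra_simps)
qed

lemma of_int_arc_sign [simp]: "of_int (arc_sign a) = arc_sign a"
  by (simp add: arc_sign_def)

lemma arc_len_eq:
  assumes circ: "circular_rep m n A l k" and a: "snd a \<in> {1..m+n}"
  shows "arc_len m k a = int (arc_head m n l k a) - int (arc_tail m n l k a)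
      + arc_sign a * int (arc_wraps m n l k (snd a)) * int n"
proof -
  let ?u = "fst (fwd_ends m n l k (snd a))" and ?K = "arc_span m k (snd a)"
  have "int ?u + int ?K = int ((?u + ?K) mod n) + int ((?u + ?K) div n) * int n"
    using mod_div_mult_eq[of "?u + ?K" n] by (metis of_nat_add of_nat_mult)
  then have "int ?K = int (snd (fwd_ends m n l k (snd a))) - int ?u
      + int (arc_wraps m n l k (snd a)) * int n"
    unfolding fwd_ends_cyclic(2)[OF circ a] arc_wraps_def by linarith
  moreover have "arc_len m k a = arc_sign a * int ?K"
    by (simp add: arc_len_def arc_span_def arc_sign_def Let_def)
  ultimately show ?thesis
    by (cases "fst a") (simp_all add: arc_head_def arc_tail_def arc_sign_def algebra_simps)
qed

lemma winding_eq_sum_wraps: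
  assumes circ: "circular_rep m n A l k" and cyc: "is_circuit m n l k \<Gamma>"
  shows "winding m n k \<Gamma> = (\<Sum>a\<in>set \<Gamma>. arc_sign a * int (arc_wraps m n l k (snd a)))"
proof -
  have arcs: "\<forall>a\<in>set \<Gamma>. snd a \<in> {1..m+n}" using cyc unfolding is_circuit_def by blast
  have "(\<Sum>a\<in>set \<Gamma>. arc_len m k a)
      = (\<Sum>a\<in>set \<Gamma>. int (arc_head m n l k a) - int (arc_tail m n l k a))
        + (\<Sum>a\<in>set \<Gamma>. arc_sign a * int (arc_wraps m n l k (snd a))) * int n"
    using arc_len_eq[OF circ] arcs by (simp add: sum.distrib sum_distrib_right)
  also have "(\<Sum>a\<in>set \<Gamma>. int (arc_head m n l k a) - int (arc_tail m n l k a)) = 0"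
    by (rule circuit_telescope[OF cyc])
  finally show ?thesis
    using circuit_n_pos[OF circ cyc] by (simp add: winding_def)
qed

lemma circuit_signed_row_sum:
  assumes circ: "circular_rep m n A l k" and cyc: "is_circuit m n l k \<Gamma>"
  shows "(\<Sum>a\<in>set \<Gamma>. arc_sign a * (\<Sum>j=1..n. ext_row m A (snd a) j * y j))
    = of_int (winding m n k \<Gamma>) * (\<Sum>j=1..n. y j)"
proof -
  have arcs: "\<forall>a\<in>set \<Gamma>. snd a \<in> {1..m+n}" using cyc unfolding is_circuit_def by blast
  have "(\<Sum>a\<in>set \<Gamma>. arc_sign a * (\<Sum>j=1..n. ext_row m A (snd a) j * y j))
      = (\<Sum>a\<in>set \<Gamma>. prefix_sum y (arc_head m n l k a) - prefix_sum y (arc_tail m n l k a))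
        + (\<Sum>a\<in>set \<Gamma>. arc_sign a * real (arc_wraps m n l k (snd a))) * prefix_sum y n"
    using signed_ext_row_sum[OF circ] arcs by (simp add: sum.distrib sum_distrib_right)
  also have "(\<Sum>a\<in>set \<Gamma>. prefix_sum y (arc_head m n l k a) - prefix_sum y (arc_tail m n l k a)) = 0"
    by (rule circuit_telescope[OF cyc])
  also have "(\<Sum>a\<in>set \<Gamma>. arc_sign a * real (arc_wraps m n l k (snd a))) = of_int (winding m n k \<Gamma>)"
    by (simp add: winding_eq_sum_wraps[OF circ cyc] of_int_sum)
  finally show ?thesis by (simp add: prefix_sum_def)
qed

lemma circuit_signed_last_column:
  assumes circ: "circular_rep m n A l k" and cyc: "is_circuit m n l k \<Gamma>"
  shows "(\<Sum>a\<in>set \<Gamma>. arc_sign a * ext_row m A (snd a) n) = of_int (winding m n k \<Gamma>)"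
proof -
  have n: "0 < n" using circuit_n_pos[OF circ cyc] .
  let ?e = "\<lambda>j. if j = n then 1 else 0 :: real"
  have "(\<Sum>j=1..n. ext_row m A r j * ?e j) = ext_row m A r n" for r
    using n by (simp add: if_distrib cong: if_cong)
  moreover have "(\<Sum>j=1..n. ?e j) = 1" using n by simp
  ultimately show ?thesis using circuit_signed_row_sum[OF circ cyc, of ?e] by simp
qed

lemma ext_row_eq_jumps:
  assumes circ: "circular_rep m n A l k" and "snd a \<in> {1..m+n}" and "j \<in> {1..n}"
  shows "ext_row m A (snd a) j = (if jumps m n l k a j then 1 else 0)"
  using assms unfolding ext_row_def jumps_def circular_rep_def by auto

definition ext_rhs :: "nat \<Rightarrow> (nat \<Rightarrow> int) \<Rightarrow> nat \<Rightarrow> real" where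
  "ext_rhs m b r = (if r \<le> m then of_int (b r) else 0)"

lemma slack_eq: "slack m n A b x r = (\<Sum>j=1..n. ext_row m A r j * x j) - ext_rhs m b r"
  unfolding slack_def ext_rhs_def ..

lemma slack_nonneg:
  assumes "x \<in> Qpoly m n A b" and "r \<in> {1..m+n}"
  shows "0 \<le> slack m n A b x r"
proof (cases "r \<le> m")
  case True
  then show ?thesis using assms unfolding Qpoly_def slack_def ext_row_def by auto
next
  case False
  then have "0 \<le> (\<Sum>j=1..n. ext_row m A r j * x j)"
    using assms(1) unfolding Qpoly_def ext_row_def by (intro sum_nonneg) auto
  then show ?thesis using False unfolding slack_def by simp
qed

lemma sum_side_indices:
  fixes G :: "('a \<times> nat) set"
  assumes "finite G" and "\<forall>a\<in>G. 1 \<le> snd a"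
  shows "(\<Sum>i\<in>{i\<in>{1..m}. (f, i) \<in> G}. g i)
    = (\<Sum>a\<in>G. if fst a = f \<and> snd a \<le> m then g (snd a) else (0::'b::comm_monoid_add))"
proof -
  have "(\<Sum>a\<in>G. if fst a = f \<and> snd a \<le> m then g (snd a) else 0)
      = sum (g \<circ> snd) {a\<in>G. fst a = f \<and> snd a \<le> m}"
    using assms(1) by (simp add: sum.inter_filter)
  also have "\<dots> = sum g (snd ` {a\<in>G. fst a = f \<and> snd a \<le> m})"
    by (rule sum.reindex[symmetric]) (auto simp: inj_on_def prod_eq_iff)
  also have "snd ` {a\<in>G. fst a = f \<and> snd a \<le> m} = {i\<in>{1..m}. (f, i) \<in> G}"
    using assms(2) by force
  finally show ?thesis by simp
qed

lemma t_val_eq_signed_sum: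
  assumes "\<forall>a\<in>set \<Gamma>. 1 \<le> snd a"
  shows "of_int (t_val m b \<Gamma>) = (\<Sum>a\<in>set \<Gamma>. arc_sign a * ext_rhs m b (snd a))"
proof -
  have "of_int (t_val m b \<Gamma>)
      = (\<Sum>a\<in>set \<Gamma>. if fst a = True \<and> snd a \<le> m then of_int (b (snd a)) else 0)
        - (\<Sum>a\<in>set \<Gamma>. if fst a = False \<and> snd a \<le> m then of_int (b (snd a)) else (0::real))"
    unfolding t_val_def of_int_diff of_int_sum by (simp only: sum_side_indices[OF finite_set assms])
  also have "\<dots> = (\<Sum>a\<in>set \<Gamma>. arc_sign a * ext_rhs m b (snd a))"
    unfolding sum_subtractf[symmetric] by (intro sum.cong) (auto simp: arc_sign_def ext_rhs_def)
  finally show ?thesis .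
qed

lemma rev_b_eq_sum:
  assumes "\<forall>a\<in>set \<Gamma>. 1 \<le> snd a"
  shows "of_int (rev_b m b \<Gamma>) = (\<Sum>a\<in>set \<Gamma>. if fst a then 0 else ext_rhs m b (snd a))"
proof -
  have "of_int (rev_b m b \<Gamma>)
      = (\<Sum>a\<in>set \<Gamma>. if fst a = False \<and> snd a \<le> m then of_int (b (snd a)) else (0::real))"
    unfolding rev_b_def of_int_sum by (simp only: sum_side_indices[OF finite_set assms])
  also have "\<dots> = (\<Sum>a\<in>set \<Gamma>. if fst a then 0 else ext_rhs m b (snd a))"
    by (intro sum.cong) (auto simp: ext_rhs_def)
  finally show ?thesis .
qed

definition fwd_slack :: "nat \<Rightarrow> nat \<Rightarrow> (nat \<Rightarrow> nat \<Rightarrow> real) \<Rightarrow> (nat \<Rightarrow> int) \<Rightarrow> (nat \<Rightarrow> real) \<Rightarrow> arc list \<Rightarrow> real" where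
  "fwd_slack m n A b x \<Gamma> = (\<Sum>a\<in>set \<Gamma>. if fst a then slack m n A b x (snd a) else 0)"

definition rev_slack :: "nat \<Rightarrow> nat \<Rightarrow> (nat \<Rightarrow> nat \<Rightarrow> real) \<Rightarrow> (nat \<Rightarrow> int) \<Rightarrow> (nat \<Rightarrow> real) \<Rightarrow> arc list \<Rightarrow> real" where
  "rev_slack m n A b x \<Gamma> = (\<Sum>a\<in>set \<Gamma>. if fst a then 0 else slack m n A b x (snd a))"

lemma circuit_slack_balance:
  assumes circ: "circular_rep m n A l k" and cyc: "is_circuit m n l k \<Gamma>"
  shows "fwd_slack m n A b x \<Gamma> - rev_slack m n A b x \<Gamma>
    = of_int (winding m n k \<Gamma>) * (\<Sum>j=1..n. x j) - of_int (t_val m b \<Gamma>)"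
proof -
  have arcs: "\<forall>a\<in>set \<Gamma>. 1 \<le> snd a" using cyc unfolding is_circuit_def by auto
  have "fwd_slack m n A b x \<Gamma> - rev_slack m n A b x \<Gamma> = (\<Sum>a\<in>set \<Gamma>. arc_sign a * slack m n A b x (snd a))"
    unfolding fwd_slack_def rev_slack_def sum_subtractf[symmetric]
    by (intro sum.cong) (auto simp: arc_sign_def)
  also have "\<dots> = (\<Sum>a\<in>set \<Gamma>. arc_sign a * (\<Sum>j=1..n. ext_row m A (snd a) j * x j))
      - (\<Sum>a\<in>set \<Gamma>. arc_sign a * ext_rhs m b (snd a))"
    by (simp add: slack_eq right_diff_distrib sum_subtractf)
  also have "\<dots> = of_int (winding m n k \<Gamma>) * (\<Sum>j=1..n. x j) - of_int (t_val m b \<Gamma>)"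
    unfolding circuit_signed_row_sum[OF circ cyc] t_val_eq_signed_sum[OF arcs] ..
  finally show ?thesis .
qed

lemma circuit_cost_eq:
  assumes circ: "circular_rep m n A l k" and cyc: "is_circuit m n l k \<Gamma>"
  shows "circuit_cost m n A b x \<Gamma> = mu n x * fwd_slack m n A b x \<Gamma> + (1 - mu n x) * rev_slack m n A b x \<Gamma>
    - mu n x * (1 - mu n x) * of_int (winding m n k \<Gamma>)"
proof -
  let ?\<mu> = "mu n x"
  have "circuit_cost m n A b x \<Gamma> = (\<Sum>a\<in>set \<Gamma>.
      ?\<mu> * (if fst a then slack m n A b x (snd a) else 0)
      + (1 - ?\<mu>) * (if fst a then 0 else slack m n A b x (snd a))
      - ?\<mu> * (1 - ?\<mu>) * (arc_sign a * ext_row m A (snd a) n))"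
    unfolding circuit_cost_def
    by (intro sum.cong) (auto simp: arc_cost_def c_plus_def c_minus_def arc_sign_def algebra_simps)
  also have "\<dots> = ?\<mu> * fwd_slack m n A b x \<Gamma> + (1 - ?\<mu>) * rev_slack m n A b x \<Gamma>
      - ?\<mu> * (1 - ?\<mu>) * (\<Sum>a\<in>set \<Gamma>. arc_sign a * ext_row m A (snd a) n)"
    unfolding fwd_slack_def rev_slack_def by (simp add: sum.distrib sum_subtractf sum_distrib_left)
  finally show ?thesis by (simp add: circuit_signed_last_column[OF circ cyc])
qed

lemma p_minus_weighted_sum:
  assumes circ: "circular_rep m n A l k" and cyc: "is_circuit m n l k \<Gamma>"
  shows "(\<Sum>j=1..n. real (p_minus m n l k \<Gamma> j) * x j) = rev_slack m n A b x \<Gamma> + of_int (rev_b m b \<Gamma>)"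
proof -
  have arcs: "\<forall>a\<in>set \<Gamma>. snd a \<in> {1..m+n}" using cyc unfolding is_circuit_def by blast
  have "(\<Sum>j=1..n. real (p_minus m n l k \<Gamma> j) * x j)
      = (\<Sum>j=1..n. \<Sum>a\<in>set \<Gamma>. if \<not> fst a \<and> jumps m n l k a j then x j else 0)"
    unfolding p_minus_def by (simp add: sum.If_cases Int_def sum_distrib_right)
  also have "\<dots> = (\<Sum>a\<in>set \<Gamma>. \<Sum>j=1..n. if \<not> fst a \<and> jumps m n l k a j then x j else 0)"
    by (rule sum.swap)
  also have "\<dots> = (\<Sum>a\<in>set \<Gamma>. if fst a then 0 else (\<Sum>j=1..n. ext_row m A (snd a) j * x j))"
  proof (intro sum.cong refl)
    fix a assume "a \<in> set \<Gamma>"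
    then have "ext_row m A (snd a) j = (if jumps m n l k a j then 1 else 0)" if "j \<in> {1..n}" for j
      using ext_row_eq_jumps[OF circ _ that] arcs by blast
    then show "(\<Sum>j=1..n. if \<not> fst a \<and> jumps m n l k a j then x j else 0)
        = (if fst a then 0 else (\<Sum>j=1..n. ext_row m A (snd a) j * x j))"
      by (auto intro!: sum.cong)
  qed
  also have "\<dots> = rev_slack m n A b x \<Gamma> + (\<Sum>a\<in>set \<Gamma>. if fst a then 0 else ext_rhs m b (snd a))"
    unfolding rev_slack_def slack_eq sum.distrib[symmetric] by (intro sum.cong) auto
  finally show ?thesis
    using arcs by (simp add: rev_b_eq_sum)
qed

lemma negative_cost_arith:
  fixes SF SR T :: real and p t :: int
  defines "\<mu> \<equiv> of_int \<lceil>T\<rceil> - T"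
  assumes SF: "0 \<le> SF" and SR: "0 \<le> SR"
    and balance: "SF - SR = of_int p * T - of_int t"
    and cost: "\<mu> * SF + (1 - \<mu>) * SR - \<mu> * (1 - \<mu>) * of_int p < 0"
  shows "p \<noteq> 0" and "SR + of_int (t mod p) * T < of_int (t mod p * (t div p + 1))"
proof -
  have \<mu>0: "0 \<le> \<mu>" and \<mu>1: "\<mu> < 1"
    unfolding \<mu>_def by (simp_all add: ceiling_correct) linarith
  show p0: "p \<noteq> 0"
  proof
    assume "p = 0"
    moreover have "0 \<le> \<mu> * SF" "0 \<le> (1 - \<mu>) * SR" using SF SR \<mu>0 \<mu>1 by simp_all
    ultimately show False using cost by simp
  qed
  define r where "r = t mod p"
  \<comment> \<open>The cost bound squeezes \<open>p * D < r < p * (D + 1)\<close>, so \<open>p > 0\<close> and \<open>D = 0\<close>,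
    i.e. \<open>\<lceil>T\<rceil> = t div p + 1\<close>.\<close>
  define D where "D = \<lceil>T\<rceil> - 1 - t div p"
  have t: "t = r + (t div p) * p" unfolding r_def by simp
  have SF_eq: "SF = SR + of_int p * (of_int D + 1) - of_int p * \<mu> - of_int r"
    using balance arg_cong[OF t, of real_of_int] unfolding D_def \<mu>_def by (simp add: algebra_simps)
  have SR_lt: "SR < \<mu> * (of_int r - of_int p * of_int D)"
    using cost unfolding SF_eq by (simp add: algebra_simps)
  have "(1 - \<mu>) * (of_int r - of_int p * (of_int D + 1))
      = (SR - SF) - \<mu> * (of_int r - of_int p * of_int D)"
    unfolding SF_eq by (simp add: algebra_simps)
  then have "(1 - \<mu>) * (of_int r - of_int p * (of_int D + 1)) < 0"
    using SR_lt SF by linarith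
  then have "of_int r - of_int p * (of_int D + 1) < (0::real)"
    using \<mu>1 by (simp add: mult_less_0_iff)
  then have upper: "r < p * (D + 1)"
    by (metis of_int_less_iff of_int_mult of_int_add of_int_1 diff_less_0_iff_less)
  have "0 < \<mu> * (of_int r - of_int p * of_int D)" using SR_lt SR by linarith
  then have "(0::real) < of_int r - of_int p * of_int D"
    using \<mu>0 by (simp add: zero_less_mult_iff)
  then have lower: "p * D < r"
    by (metis of_int_less_iff of_int_mult diff_gt_0_iff_gt)
  have "0 < p"
  proof (rule ccontr)
    assume "\<not> 0 < p"
    then have "p * (D + 1) < p * D" using p0 by (simp add: algebra_simps)
    then show False using upper lower by simp
  qed
  then have "0 \<le> r" "r < p" unfolding r_def by simp_all
  with \<open>0 < p\<close> upper lower have "D = 0"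
    by (smt (verit) mult_le_cancel_left1 mult_le_0_iff)
  then have "of_int \<lceil>T\<rceil> = of_int (t div p) + (1::real)" unfolding D_def by simp
  then show "SR + of_int (t mod p) * T < of_int (t mod p * (t div p + 1))"
    using SR_lt \<open>D = 0\<close> unfolding r_def \<mu>_def by (simp add: algebra_simps)
qed

theorem lemma4p7:
  fixes m n :: nat and A :: "nat \<Rightarrow> nat \<Rightarrow> real" and l k :: "nat \<Rightarrow> nat"
    and b :: "nat \<Rightarrow> int" and x :: "nat \<Rightarrow> real" and \<Gamma> :: "arc list"
  assumes circ: "circular_rep m n A l k"
    and b_nonneg: "\<forall>i\<in>{1..m}. b i \<ge> 0"
    and x_Q: "x \<in> Qpoly m n A b"
    and x_notQ: "x \<notin> Qint_hull m n A b"
    and cyc: "is_circuit m n l k \<Gamma>"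
    and neg: "circuit_cost m n A b x \<Gamma> < 0"
  shows "winding m n k \<Gamma> \<noteq> 0 \<and> gamma_ineq_violated m n l k b \<Gamma> x"
proof -
  let ?p = "winding m n k \<Gamma>" and ?t = "t_val m b \<Gamma>"
  have arcs: "\<forall>a\<in>set \<Gamma>. snd a \<in> {1..m+n}" using cyc unfolding is_circuit_def by blast
  have "0 \<le> fwd_slack m n A b x \<Gamma>" "0 \<le> rev_slack m n A b x \<Gamma>"
    unfolding fwd_slack_def rev_slack_def using slack_nonneg[OF x_Q] arcs by (auto intro!: sum_nonneg)
  moreover note circuit_slack_balance[OF circ cyc, of b x]
  moreover note neg[unfolded circuit_cost_eq[OF circ cyc] mu_def]
  ultimately have "?p \<noteq> 0" and
    "rev_slack m n A b x \<Gamma> + of_int (?t mod ?p) * (\<Sum>j=1..n. x j) < of_int (?t mod ?p * (?t div ?p + 1))"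
    by (rule negative_cost_arith)+
  moreover have "(\<Sum>j=1..n. (real (p_minus m n l k \<Gamma> j) + of_int r) * x j)
      = rev_slack m n A b x \<Gamma> + of_int (rev_b m b \<Gamma>) + of_int r * (\<Sum>j=1..n. x j)" for r
    unfolding distrib_right sum.distrib p_minus_weighted_sum[OF circ cyc, where b = b] sum_distrib_left ..
  ultimately show ?thesis
    unfolding gamma_ineq_violated_def Let_def floor_divide_of_int_eq minus_div_mult_eq_mod by simp
qed

end
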